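(* Let $k\ge1$, let $A,B_1,\dots,B_k,C_1,\dots,C_k\in\mathbb{C}^{r\times r}$ with $C_i+mI$ invertible for all integers $m\ge0$ and all $i$, and assume $AB_i=B_iA$, $B_iB_j=B_jB_i$, $C_iC_j=C_jC_i$ for all $i,j$. Let $n\ge1$ and suppose $A+mI$ is invertible for all $m\ge0$. Then $$F_{\mathcal A}[A+nI]=\sum_{N_k\le n}\binom{n}{n_1,\dots,n_k}\prod_{i=1}^k (B_i)_{n_i}x_i^{n_i}\;F_{\mathcal A}[A+N_kI,\,B_1+n_1I,\dots,B_k+n_kI,\,C_1+n_1I,\dots,C_k+n_kI]\;\prod_{i=1}^k (C_i)^{-1}_{n_i}.$$ Furthermore, if $A-n_1I$ is invertible for all $0\le n_1\le n$, then $$F_{\mathcal A}[A-nI]=\sum_{N_k\le n}\binom{n}{n_1,\dots,n_k}\prod_{i=1}^k (B_i)_{n_i}(-x_i)^{n_i}\;F_{\mathcal A}[B_1+n_1I,\dots,B_k+n_kI,\,C_1+n_1I,\dots,C_k+n_kI]\;\prod_{i=1}^k (C_i)^{-1}_{n_i}.$$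
   Context: For $M\in\mathbb{C}^{r\times r}$: $(M)_0=I$, $(M)_m=M(M+I)\cdots(M+(m-1)I)$, $(M)^{-1}_m=((M)_m)^{-1}$. $$F_{\mathcal A}=F_{\mathcal A}[A,B_1,\dots,B_k;C_1,\dots,C_k;x_1,\dots,x_k]=\sum_{m_1,\dots,m_k\ge0}(A)_{m_1+\cdots+m_k}\prod_{i=1}^k(B_i)_{m_i}\prod_{i=1}^k(C_i)^{-1}_{m_i}\prod_{i=1}^k\frac{x_i^{m_i}}{m_i!},$$ $x_i$ scalar variables, matrix products in order of increasing index; identities are of formal power series in the $x_i$. Bracket notation $F_{\mathcal A}[\dots]$ lists only the shifted parameters (others unchanged). The sum runs over all tuples $(n_1,\dots,n_k)$ of nonnegative integers with $N_k:=n_1+\cdots+n_k\le n$, and $\binom{n}{n_1,\dots,n_k}:=\frac{n!}{n_1!\cdots n_k!\,(n-N_k)!}$. In the second formula the parameter $A$ is unshifted. *)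

theory Defs
  imports "HOL-Analysis.Analysis"
begin

text \<open>Formal power series in x_1..x_k (indices 0..k-1 here) with matrix coefficients are
  represented by their coefficient functions (nat => nat) => matrix, a multi-index m
  standing for the monomial prod_{i<k} x_i^(m i); coefficients at multi-indices with
  support outside {..<k} are 0.\<close>

fun mprod :: "nat \<Rightarrow> (nat \<Rightarrow> complex^'r^'r) \<Rightarrow> complex^'r^'r" where
  "mprod 0 f = mat 1"
| "mprod (Suc j) f = mprod j f ** f j"

definition mpoch :: "complex^'r^'r \<Rightarrow> nat \<Rightarrow> complex^'r^'r" where
  "mpoch M m = mprod m (\<lambda>j. M + mat (of_nat j))"

definition mpoch_inv :: "complex^'r^'r \<Rightarrow> nat \<Rightarrow> complex^'r^'r" where
  "mpoch_inv M m = matrix_inv (mpoch M m)"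

text \<open>Coefficient of x^m in F_A[A,B_1..B_k;C_1..C_k;x_1..x_k].\<close>
definition FA :: "nat \<Rightarrow> complex^'r^'r \<Rightarrow> (nat \<Rightarrow> complex^'r^'r) \<Rightarrow> (nat \<Rightarrow> complex^'r^'r)
                  \<Rightarrow> (nat \<Rightarrow> nat) \<Rightarrow> complex^'r^'r" where
  "FA k A B C m = (if \<forall>i\<ge>k. m i = 0 then
      (1 / (\<Prod>i<k. fact (m i) :: real)) *\<^sub>R
        (mpoch A (\<Sum>i<k. m i) ** mprod k (\<lambda>i. mpoch (B i) (m i)) ** mprod k (\<lambda>i. mpoch_inv (C i) (m i)))
    else 0)"

text \<open>Multiplication of a series f by the monomial prod_{i<k} (c_i x_i)^(nu i).\<close>
definition xmono :: "nat \<Rightarrow> (nat \<Rightarrow> real) \<Rightarrow> (nat \<Rightarrow> nat) \<Rightarrow> ((nat \<Rightarrow> nat) \<Rightarrow> complex^'r^'r)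
                     \<Rightarrow> (nat \<Rightarrow> nat) \<Rightarrow> complex^'r^'r" where
  "xmono k c nu f m = (if \<forall>i. nu i \<le> m i then (\<Prod>i<k. c i ^ nu i) *\<^sub>R f (\<lambda>i. m i - nu i) else 0)"

definition tuples :: "nat \<Rightarrow> nat \<Rightarrow> (nat \<Rightarrow> nat) set" where
  "tuples k n = {nu. (\<forall>i\<ge>k. nu i = 0) \<and> (\<Sum>i<k. nu i) \<le> n}"

definition multinom :: "nat \<Rightarrow> nat \<Rightarrow> (nat \<Rightarrow> nat) \<Rightarrow> real" where
  "multinom n k nu = fact n / ((\<Prod>i<k. fact (nu i)) * fact (n - (\<Sum>i<k. nu i)))"

end

theory Submission
  imports Defs
begin

text \<open>
  Let \<open>|m| = m\<^sub>1 + \<dots> + m\<^sub>k\<close>. Since \<open>(B\<^sub>i)\<^sub>\<nu> (B\<^sub>i + \<nu>)\<^sub>m\<^sub>-\<^sub>\<nu> = (B\<^sub>i)\<^sub>m\<close> and the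
  \<open>B\<^sub>i\<close> (resp. \<open>C\<^sub>i\<close>) commute with each other, the coefficient of \<open>x\<^sup>m\<close> in the summand of index \<open>\<nu>\<close>
  is \<open>(B)\<^sub>m (C)\<^sup>-\<^sup>1\<^sub>m\<close> framing a Pochhammer symbol of the shifted \<open>A\<close> of length \<open>|m| - |\<nu>|\<close>.
  Grouping the \<open>\<nu>\<close> by \<open>j = |\<nu>|\<close> with the multivariate Vandermonde identity
  \<open>\<Sum>\<^bsub>|\<nu>| = j\<^esub> \<Prod>\<^sub>i (m\<^sub>i choose \<nu>\<^sub>i) = |m| choose j\<close> reduces both formulas to the expansions
  \<open>(A + n)\<^sub>M = \<Sum>\<^sub>j (M choose j) n!/(n-j)! (A + j)\<^sub>M\<^sub>-\<^sub>j\<close> and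
  \<open>(A - n)\<^sub>M = \<Sum>\<^sub>j (-1)\<^sup>j (M choose j) n!/(n-j)! (A)\<^sub>M\<^sub>-\<^sub>j\<close>, which follow by induction on \<open>n\<close>
  from the contiguous relation \<open>(X + 1)\<^sub>M = (X)\<^sub>M + M (X + 1)\<^sub>M\<^sub>-\<^sub>1\<close>.
  The identities hold coefficientwise for every \<open>A\<close>.
\<close>

lemma matrix_add_rdistrib:
  fixes A B :: "'a::semiring_1^'n^'m"
  shows "(A + B) ** C = A ** C + B ** C"
  by (vector matrix_matrix_mult_def sum.distrib[symmetric] field_simps)

lemma sum_matrix_mult:
  fixes f :: "'i \<Rightarrow> 'a::semiring_1^'n^'m"
  shows "finite S \<Longrightarrow> (\<Sum>x\<in>S. f x) ** C = (\<Sum>x\<in>S. f x ** C)"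
  by (induction S rule: finite_induct) (auto simp: matrix_add_rdistrib)

lemma scaleR_matrix_mult_right:
  fixes A :: "'a::real_algebra_1^'n^'m"
  shows "A ** (r *\<^sub>R B) = r *\<^sub>R (A ** B)"
  by (simp add: matrix_scalar_ac scalar_matrix_assoc)

lemma mat_add: "(mat a :: 'a::monoid_add^'n^'n) + mat b = mat (a + b)"
  by (simp add: mat_def vec_eq_iff)

lemma mat_diff: "(mat a :: 'a::group_add^'n^'n) - mat b = mat (a - b)"
  by (simp add: mat_def vec_eq_iff)

lemma mat_of_nat_eq_scaleR: "(mat (of_nat j) :: 'a::real_algebra_1^'n^'n) = real j *\<^sub>R mat 1"
  by (simp add: mat_def vec_eq_iff of_real_def[symmetric])

definition commute :: "'a::semiring_1^'n^'n \<Rightarrow> 'a^'n^'n \<Rightarrow> bool" where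
  "commute X Y \<longleftrightarrow> X ** Y = Y ** X"

lemma commute_sym: "commute X Y \<Longrightarrow> commute Y X"
  by (simp add: commute_def)

lemma commute_refl: "commute X X"
  by (simp add: commute_def)

lemma commute_mat: "commute (X :: 'a::comm_semiring_1^'n^'n) (mat c)"
  by (simp add: commute_def matrix_matrix_mult_def mat_def vec_eq_iff if_distrib if_distribR
      mult.commute cong: if_cong)

lemma commute_add: "commute X Y \<Longrightarrow> commute X Z \<Longrightarrow> commute X (Y + Z)"
  by (simp add: commute_def matrix_add_ldistrib matrix_add_rdistrib)

lemma commute_add_mat: "commute (X :: 'a::comm_semiring_1^'n^'n) Y \<Longrightarrow> commute X (Y + mat c)"
  by (intro commute_add commute_mat)

lemma commute_add_mat_left: "commute (X :: 'a::comm_semiring_1^'n^'n) Y \<Longrightarrow> commute (X + mat c) Y"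
  by (rule commute_sym, rule commute_add_mat, erule commute_sym)

lemma commute_mult: "commute X Y \<Longrightarrow> commute X Z \<Longrightarrow> commute X (Y ** Z)"
  by (simp add: commute_def) (metis matrix_mul_assoc)

lemma matrix_mul_matrix_inv:
  assumes "invertible (X :: 'a::semiring_1^'n^'n)"
  shows "X ** matrix_inv X = mat 1" and "matrix_inv X ** X = mat 1"
  using someI_ex[OF assms[unfolded invertible_def]] by (simp_all add: matrix_inv_def)

lemma invertible_mat_1: "invertible (mat 1 :: 'a::semiring_1^'n^'n)"
  unfolding invertible_def by (intro exI[of _ "mat 1"]) simp

lemma commute_matrix_inv:
  assumes "commute X Y" and Y: "invertible (Y :: 'a::semiring_1^'n^'n)"
  shows "commute X (matrix_inv Y)"
proof -
  let ?Y = "matrix_inv Y"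
  have "?Y ** X = ?Y ** X ** (Y ** ?Y)" by (simp add: matrix_mul_matrix_inv[OF Y])
  also have "\<dots> = ?Y ** (X ** Y) ** ?Y" by (simp add: matrix_mul_assoc)
  also have "\<dots> = ?Y ** (Y ** X) ** ?Y" using assms(1) by (simp add: commute_def)
  also have "\<dots> = X ** ?Y" by (simp add: matrix_mul_assoc matrix_mul_matrix_inv[OF Y])
  finally show ?thesis by (simp add: commute_def)
qed

lemma matrix_inv_mult:
  assumes X: "invertible (X :: 'a::semiring_1^'n^'n)" and Y: "invertible (Y :: 'a^'n^'n)"
  shows "matrix_inv (X ** Y) = matrix_inv Y ** matrix_inv X"
proof -
  let ?Z = "matrix_inv Y ** matrix_inv X"
  have "(X ** Y) ** ?Z = X ** (Y ** matrix_inv Y) ** matrix_inv X"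
    by (simp add: matrix_mul_assoc)
  then have "(X ** Y) ** ?Z = mat 1"
    by (simp add: matrix_mul_matrix_inv(1)[OF X] matrix_mul_matrix_inv(1)[OF Y])
  then have "matrix_inv (X ** Y) = matrix_inv (X ** Y) ** ((X ** Y) ** ?Z)" by simp
  also have "\<dots> = (matrix_inv (X ** Y) ** (X ** Y)) ** ?Z" by (simp only: matrix_mul_assoc)
  also have "\<dots> = ?Z" by (simp add: matrix_mul_matrix_inv(2)[OF invertible_mult[OF X Y]])
  finally show ?thesis .
qed

lemma mprod_cong: "(\<And>i. i < k \<Longrightarrow> f i = g i) \<Longrightarrow> mprod k f = mprod k g"
  by (induction k) auto

lemma commute_mprod: "(\<And>j. j < k \<Longrightarrow> commute X (f j)) \<Longrightarrow> commute X (mprod k f)"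
  by (induction k) (auto intro: commute_mult commute_mat)

lemma mprod_mult:
  assumes "\<And>i j. i < k \<Longrightarrow> j < k \<Longrightarrow> commute (f i) (g j)"
  shows "mprod k f ** mprod k g = mprod k (\<lambda>i. f i ** g i)"
  using assms
proof (induction k)
  case 0
  then show ?case by simp
next
  case (Suc k)
  have "commute (f k) (mprod k g)"
    by (rule commute_mprod) (use Suc.prems in auto)
  then have "mprod k f ** (f k ** mprod k g) ** g k = mprod k f ** (mprod k g ** f k) ** g k"
    by (simp add: commute_def)
  then have "mprod (Suc k) f ** mprod (Suc k) g = (mprod k f ** mprod k g) ** (f k ** g k)"
    by (simp add: matrix_mul_assoc)
  with Suc show ?case by simp
qed

lemma mpoch_0 [simp]: "mpoch X 0 = mat 1"
  by (simp add: mpoch_def)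

lemma mpoch_Suc: "mpoch X (Suc m) = mpoch X m ** (X + mat (of_nat m))"
  by (simp add: mpoch_def)

lemma mpoch_add: "mpoch X (a + b) = mpoch X a ** mpoch (X + mat (of_nat a)) b"
proof (induction b)
  case 0
  then show ?case by simp
next
  case (Suc b)
  have "X + mat (of_nat (a + b)) = X + mat (of_nat a) + mat (of_nat b)"
    by (simp add: mat_add add.assoc)
  with Suc show ?case by (simp add: mpoch_Suc matrix_mul_assoc add.assoc)
qed

lemma commute_mpoch: "commute X Y \<Longrightarrow> commute X (mpoch Y m)"
  unfolding mpoch_def by (rule commute_mprod) (simp add: commute_add_mat)

lemma commute_mpoch_mpoch: "commute X Y \<Longrightarrow> commute (mpoch X a) (mpoch Y b)"
  by (rule commute_mpoch, rule commute_sym, rule commute_mpoch, erule commute_sym)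

lemma invertible_mpoch:
  assumes "\<And>l. invertible (X + mat (of_nat l))"
  shows "invertible (mpoch X m)"
  by (induction m) (simp_all add: mpoch_Suc invertible_mat_1 invertible_mult assms)

lemma commute_mpoch_inv_mpoch_inv:
  assumes "commute X Y"
    and "\<And>l. invertible (X + mat (of_nat l))" and "\<And>l. invertible (Y + mat (of_nat l))"
  shows "commute (mpoch_inv X a) (mpoch_inv Y b)"
proof -
  have "commute (mpoch Y b) (mpoch X a)"
    by (rule commute_mpoch_mpoch, rule commute_sym, rule assms(1))
  then have "commute (mpoch_inv X a) (mpoch Y b)"
    unfolding mpoch_inv_def by (intro commute_sym[OF commute_matrix_inv] invertible_mpoch assms(2))
  then show ?thesis
    unfolding mpoch_inv_def by (intro commute_matrix_inv invertible_mpoch assms(3))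
qed

lemma mpoch_inv_add:
  assumes "\<And>l. invertible (X + mat (of_nat l))"
  shows "mpoch_inv X (a + b) = mpoch_inv (X + mat (of_nat a)) b ** mpoch_inv X a"
proof -
  have "invertible (X + mat (of_nat a) + mat (of_nat l))" for l
    using assms[of "a + l"] by (simp add: add.assoc mat_add)
  then show ?thesis
    unfolding mpoch_inv_def mpoch_add by (intro matrix_inv_mult invertible_mpoch assms)
qed

lemma mpoch_add_one:
  fixes X :: "complex^'n^'n"
  shows "mpoch (X + mat 1) M = mpoch X M + real M *\<^sub>R mpoch (X + mat 1) (M - 1)"
proof (cases M)
  case 0
  then show ?thesis by simp
next
  case (Suc L)
  let ?P = "mpoch (X + mat 1) L"
  have "mpoch X (1 + L) = X ** ?P"
    using mpoch_add[of X 1 L] by (simp add: mpoch_Suc[of X 0])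
  moreover have "commute X ?P"
    by (rule commute_mpoch) (simp add: commute_add_mat commute_refl)
  moreover have "mpoch (X + mat 1) (Suc L) = ?P ** X + ?P ** (real (Suc L) *\<^sub>R mat 1)"
    using mat_of_nat_eq_scaleR[of "Suc L", where 'a=complex and 'n='n]
    by (simp add: mpoch_Suc matrix_add_ldistrib mat_add add.assoc)
  ultimately show ?thesis
    using Suc by (simp add: commute_def scaleR_matrix_mult_right)
qed

definition shift_coeff :: "nat \<Rightarrow> nat \<Rightarrow> nat \<Rightarrow> nat" where
  "shift_coeff n M j = (M choose j) * (n choose j) * fact j"

lemma shift_coeff_0 [simp]: "shift_coeff n M 0 = 1"
  by (simp add: shift_coeff_def)

lemma shift_coeff_Suc_self [simp]: "shift_coeff n M (Suc n) = 0"
  by (simp add: shift_coeff_def)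

lemma shift_coeff_Suc_Suc:
  "shift_coeff (Suc n) M (Suc j) = shift_coeff n M (Suc j) + M * shift_coeff n (M - 1) j"
proof -
  have "Suc j * (M choose Suc j) = M * (M - 1 choose j)"
    by (cases M) (simp_all only: Suc_times_binomial, simp_all)
  then have "(M choose Suc j) * (n choose j) * fact (Suc j) = M * shift_coeff n (M - 1) j"
    unfolding shift_coeff_def fact_Suc by (metis mult.assoc mult.commute of_nat_id)
  then show ?thesis
    by (simp add: shift_coeff_def add_mult_distrib2 add_mult_distrib add.commute)
qed

lemma sum_shift_coeff_Suc:
  fixes X :: "nat \<Rightarrow> 'a::real_vector"
  shows "(\<Sum>j\<le>n. real (shift_coeff n M j) *\<^sub>R X j)
           + real M *\<^sub>R (\<Sum>j\<le>n. real (shift_coeff n (M - 1) j) *\<^sub>R X (Suc j))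
         = (\<Sum>j\<le>Suc n. real (shift_coeff (Suc n) M j) *\<^sub>R X j)"
proof -
  have "(\<Sum>j\<le>n. real (shift_coeff n M j) *\<^sub>R X j)
      = X 0 + (\<Sum>j\<le>n. real (shift_coeff n M (Suc j)) *\<^sub>R X (Suc j))"
    using sum.atMost_Suc_shift[of "\<lambda>j. real (shift_coeff n M j) *\<^sub>R X j" n] by simp
  moreover have "(\<Sum>j\<le>Suc n. real (shift_coeff (Suc n) M j) *\<^sub>R X j)
      = X 0 + (\<Sum>j\<le>n. real (shift_coeff (Suc n) M (Suc j)) *\<^sub>R X (Suc j))"
    by (subst sum.atMost_Suc_shift) simp
  moreover have "(\<Sum>j\<le>n. real (shift_coeff (Suc n) M (Suc j)) *\<^sub>R X (Suc j))
      = (\<Sum>j\<le>n. real (shift_coeff n M (Suc j)) *\<^sub>R X (Suc j))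
        + real M *\<^sub>R (\<Sum>j\<le>n. real (shift_coeff n (M - 1) j) *\<^sub>R X (Suc j))"
    by (simp add: shift_coeff_Suc_Suc scaleR_add_left sum.distrib scaleR_sum_right)
  ultimately show ?thesis by (simp add: add.assoc)
qed

lemma mpoch_add_mat_expansion:
  "mpoch (A + mat (of_nat n)) M = (\<Sum>j\<le>n. real (shift_coeff n M j) *\<^sub>R mpoch (A + mat (of_nat j)) (M - j))"
proof (induction n arbitrary: A M)
  case 0
  then show ?case by simp
next
  case (Suc n)
  define X where "X j = mpoch (A + mat (of_nat j)) (M - j)" for j
  have shift: "A + mat 1 + mat (of_nat j) = A + mat (of_nat (Suc j))" for j
    by (simp add: add.assoc mat_add)
  have e1: "A + mat (of_nat (Suc n)) = (A + mat (of_nat n)) + mat 1"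
    by (simp add: mat_add add.assoc add.commute)
  have e2: "(A + mat (of_nat n)) + mat 1 = (A + mat 1) + mat (of_nat n)"
    by (simp add: add.assoc add.commute)
  have "mpoch (A + mat (of_nat (Suc n))) M
      = mpoch (A + mat (of_nat n)) M + real M *\<^sub>R mpoch ((A + mat 1) + mat (of_nat n)) (M - 1)"
    unfolding e1 using mpoch_add_one[of "A + mat (of_nat n)" M] by (simp only: e2)
  also have "\<dots> = (\<Sum>j\<le>n. real (shift_coeff n M j) *\<^sub>R X j)
      + real M *\<^sub>R (\<Sum>j\<le>n. real (shift_coeff n (M - 1) j) *\<^sub>R X (Suc j))"
    unfolding Suc.IH by (simp add: X_def shift)
  also have "\<dots> = (\<Sum>j\<le>Suc n. real (shift_coeff (Suc n) M j) *\<^sub>R X j)"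
    by (rule sum_shift_coeff_Suc)
  finally show ?case by (simp add: X_def)
qed

lemma mpoch_diff_mat_expansion:
  "mpoch (A - mat (of_nat n)) M = (\<Sum>j\<le>n. ((-1) ^ j * real (shift_coeff n M j)) *\<^sub>R mpoch A (M - j))"
proof (induction n arbitrary: M)
  case 0
  then show ?case by simp
next
  case (Suc n)
  define X where "X j = (-1) ^ j *\<^sub>R mpoch A (M - j)" for j
  have e: "(A - mat (of_nat (Suc n))) + mat 1 = A - mat (of_nat n)"
    by (simp add: mat_add mat_diff algebra_simps)
  have "mpoch (A - mat (of_nat (Suc n))) M
      = mpoch (A - mat (of_nat n)) M - real M *\<^sub>R mpoch (A - mat (of_nat n)) (M - 1)"
    using mpoch_add_one[of "A - mat (of_nat (Suc n))" M, unfolded e] by (simp only: eq_diff_eq)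
  also have "\<dots> = (\<Sum>j\<le>n. real (shift_coeff n M j) *\<^sub>R X j)
      + real M *\<^sub>R (\<Sum>j\<le>n. real (shift_coeff n (M - 1) j) *\<^sub>R X (Suc j))"
    unfolding Suc.IH X_def scaleR_sum_right scaleR_scaleR diff_Suc_eq_diff_pred[symmetric]
    by (simp add: sum_negf[symmetric] ac_simps)
  also have "\<dots> = (\<Sum>j\<le>Suc n. real (shift_coeff (Suc n) M j) *\<^sub>R X j)"
    by (rule sum_shift_coeff_Suc)
  finally show ?case
    unfolding X_def scaleR_scaleR by (simp only: mult.commute)
qed

lemma tuples_0: "tuples 0 n = {\<lambda>_. 0}"
  by (auto simp: tuples_def)

lemma tuples_Suc:
  "tuples (Suc k) n = (\<lambda>(nu, t). nu(k := t)) ` (SIGMA nu:tuples k n. {..n - (\<Sum>i<k. nu i)})"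
proof (intro equalityI subsetI)
  fix mu assume mu: "mu \<in> tuples (Suc k) n"
  have sum_eq: "(\<Sum>i<k. (mu(k := 0)) i) = (\<Sum>i<k. mu i)" by (rule sum.cong) auto
  have "mu(k := 0) \<in> tuples k n" and "mu k \<le> n - (\<Sum>i<k. mu i)"
    using mu sum_eq by (auto simp: tuples_def)
  then show "mu \<in> (\<lambda>(nu, t). nu(k := t)) ` (SIGMA nu:tuples k n. {..n - (\<Sum>i<k. nu i)})"
    by (intro image_eqI[where x="(mu(k := 0), mu k)"]) (auto simp: sum_eq)
next
  fix mu assume "mu \<in> (\<lambda>(nu, t). nu(k := t)) ` (SIGMA nu:tuples k n. {..n - (\<Sum>i<k. nu i)})"
  then obtain nu t where nu: "nu \<in> tuples k n" and t: "t \<le> n - (\<Sum>i<k. nu i)"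
    and mu: "mu = nu(k := t)"
    by auto
  have "(\<Sum>i<k. mu i) = (\<Sum>i<k. nu i)" unfolding mu by (rule sum.cong) auto
  with nu t show "mu \<in> tuples (Suc k) n" by (auto simp: tuples_def mu)
qed

lemma inj_on_tuples_Suc:
  "inj_on (\<lambda>(nu, t). nu(k := t)) (SIGMA nu:tuples k n. {..n - (\<Sum>i<k. nu i)})"
proof (rule inj_onI, clarify)
  fix nu t nu' t'
  assume "nu \<in> tuples k n" "nu' \<in> tuples k n" and eq: "nu(k := t) = nu'(k := t')"
  then have "nu i = nu' i" for i
    by (cases "i = k") (auto simp: tuples_def dest: fun_cong[where x=i])
  moreover have "t = t'" using eq by (metis fun_upd_same)
  ultimately show "nu = nu' \<and> t = t'" by auto
qed

lemma finite_tuples: "finite (tuples k n)"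
  by (induction k) (auto simp: tuples_0 tuples_Suc)

lemma sum_tuples_Suc:
  "(\<Sum>mu\<in>tuples (Suc k) n. f mu) = (\<Sum>nu\<in>tuples k n. \<Sum>t\<le>n - (\<Sum>i<k. nu i). f (nu(k := t)))"
  unfolding tuples_Suc sum.reindex[OF inj_on_tuples_Suc]
  by (simp add: sum.Sigma finite_tuples case_prod_beta)

lemma sum_atMost_triangle:
  "(\<Sum>j\<le>(n::nat). \<Sum>t\<le>n - j. g j t) = (\<Sum>s\<le>n. \<Sum>i\<le>s. g i (s - i))"
proof -
  have "(SIGMA i:{..n}. {..n - i}) = {(i, t). i + t \<le> n}" by auto
  then show ?thesis
    by (simp add: sum.Sigma sum.triangle_reindex_eq)
qed

lemma sum_tuples_prod_choose:
  fixes g :: "nat \<Rightarrow> 'a::real_vector"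
  shows "(\<Sum>nu\<in>tuples k n. (\<Prod>i<k. real (m i choose nu i)) *\<^sub>R g (\<Sum>i<k. nu i))
           = (\<Sum>j\<le>n. real ((\<Sum>i<k. m i) choose j) *\<^sub>R g j)"
proof (induction k arbitrary: g)
  case 0
  have "(\<Sum>j\<le>n. real (0 choose j) *\<^sub>R g j) = g 0" by (induction n) auto
  then show ?case by (simp add: tuples_0)
next
  case (Suc k)
  let ?M = "\<Sum>i<k. m i"
  define g' where "g' j = (\<Sum>t\<le>n - j. real (m k choose t) *\<^sub>R g (j + t))" for j
  have upd: "(\<Prod>i<k. real (m i choose (nu(k := t)) i)) = (\<Prod>i<k. real (m i choose nu i))"
    "(\<Sum>i<k. (nu(k := t)) i) = (\<Sum>i<k. nu i)" for nu :: "nat \<Rightarrow> nat" and t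
    by (auto intro: prod.cong sum.cong)
  have "(\<Sum>nu\<in>tuples (Suc k) n. (\<Prod>i<Suc k. real (m i choose nu i)) *\<^sub>R g (\<Sum>i<Suc k. nu i))
      = (\<Sum>nu\<in>tuples k n. (\<Prod>i<k. real (m i choose nu i)) *\<^sub>R g' (\<Sum>i<k. nu i))"
    unfolding sum_tuples_Suc g'_def scaleR_sum_right
    by (intro sum.cong refl) (simp add: upd add.commute)
  also have "\<dots> = (\<Sum>j\<le>n. real (?M choose j) *\<^sub>R g' j)"
    by (rule Suc.IH)
  also have "\<dots> = (\<Sum>j\<le>n. \<Sum>t\<le>n - j. (real (?M choose j) * real (m k choose t)) *\<^sub>R g (j + t))"
    by (simp add: g'_def scaleR_sum_right)
  also have "\<dots> = (\<Sum>s\<le>n. \<Sum>i\<le>s. (real (?M choose i) * real (m k choose (s - i))) *\<^sub>R g s)"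
    unfolding sum_atMost_triangle by (intro sum.cong refl) simp
  also have "\<dots> = (\<Sum>s\<le>n. real ((?M + m k) choose s) *\<^sub>R g s)"
    by (simp add: vandermonde[symmetric] scaleR_sum_left[symmetric])
  finally show ?case by simp
qed

lemma FA_eq:
  "\<forall>i\<ge>k. m i = 0 \<Longrightarrow> FA k X B C m = (1 / (\<Prod>i<k. fact (m i))) *\<^sub>R
     (mpoch X (\<Sum>i<k. m i) ** mprod k (\<lambda>i. mpoch (B i) (m i)) ** mprod k (\<lambda>i. mpoch_inv (C i) (m i)))"
  by (simp add: FA_def)

lemma FA_eq_0: "\<not> (\<forall>i\<ge>k. m i = 0) \<Longrightarrow> FA k X B C m = 0"
  unfolding FA_def by (rule if_not_P)

lemma mprod_mpoch_split:
  assumes "\<And>i j. i < k \<Longrightarrow> j < k \<Longrightarrow> commute (B i) (B j)" and "\<And>i. i < k \<Longrightarrow> nu i \<le> m i"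
  shows "mprod k (\<lambda>i. mpoch (B i) (nu i)) ** mprod k (\<lambda>i. mpoch (B i + mat (of_nat (nu i))) (m i - nu i))
           = mprod k (\<lambda>i. mpoch (B i) (m i))"
proof -
  have "mprod k (\<lambda>i. mpoch (B i) (nu i)) ** mprod k (\<lambda>i. mpoch (B i + mat (of_nat (nu i))) (m i - nu i))
      = mprod k (\<lambda>i. mpoch (B i) (nu i) ** mpoch (B i + mat (of_nat (nu i))) (m i - nu i))"
    by (intro mprod_mult commute_mpoch_mpoch commute_add_mat assms(1))
  also have "\<dots> = mprod k (\<lambda>i. mpoch (B i) (m i))"
    by (rule mprod_cong) (simp add: mpoch_add[symmetric] assms(2))
  finally show ?thesis .
qed

lemma mprod_mpoch_inv_split:
  assumes "\<And>i j. i < k \<Longrightarrow> j < k \<Longrightarrow> commute (C i) (C j)" and "\<And>i. i < k \<Longrightarrow> nu i \<le> m i"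
    and inv: "\<And>i l. i < k \<Longrightarrow> invertible (C i + mat (of_nat l))"
  shows "mprod k (\<lambda>i. mpoch_inv (C i + mat (of_nat (nu i))) (m i - nu i))
           ** mprod k (\<lambda>i. mpoch_inv (C i) (nu i))
         = mprod k (\<lambda>i. mpoch_inv (C i) (m i))"
proof -
  have inv_shift: "invertible (C i + mat (of_nat a) + mat (of_nat l))" if "i < k" for i a l
    using inv[OF that, of "a + l"] by (simp add: add.assoc mat_add)
  have "mprod k (\<lambda>i. mpoch_inv (C i + mat (of_nat (nu i))) (m i - nu i))
          ** mprod k (\<lambda>i. mpoch_inv (C i) (nu i))
      = mprod k (\<lambda>i. mpoch_inv (C i + mat (of_nat (nu i))) (m i - nu i) ** mpoch_inv (C i) (nu i))"
    by (intro mprod_mult commute_mpoch_inv_mpoch_inv commute_add_mat_left assms(1) inv_shift inv)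
  also have "\<dots> = mprod k (\<lambda>i. mpoch_inv (C i) (m i))"
    by (rule mprod_cong) (simp add: mpoch_inv_add[symmetric] assms(2) inv)
  finally show ?thesis .
qed

text \<open>The summand of index \<open>nu = (n\<^sub>1, \<dots>, n\<^sub>k)\<close> on the right-hand side, with the first
  parameter \<open>H N\<^sub>k\<close> (\<open>A + N\<^sub>k I\<close> resp. \<open>A\<close>) and \<open>c = \<plusminus>1\<close> the sign of the \<open>x\<^sub>i\<close>.\<close>

definition shifted_FA_term ::
  "nat \<Rightarrow> real \<Rightarrow> (nat \<Rightarrow> complex^'r^'r) \<Rightarrow> (nat \<Rightarrow> complex^'r^'r) \<Rightarrow> (nat \<Rightarrow> complex^'r^'r)
     \<Rightarrow> (nat \<Rightarrow> nat) \<Rightarrow> (nat \<Rightarrow> nat) \<Rightarrow> complex^'r^'r" where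
  "shifted_FA_term k c H B C nu m =
     mprod k (\<lambda>i. mpoch (B i) (nu i))
     ** xmono k (\<lambda>_. c) nu
          (FA k (H (\<Sum>i<k. nu i)) (\<lambda>i. B i + mat (of_nat (nu i))) (\<lambda>i. C i + mat (of_nat (nu i)))) m
     ** mprod k (\<lambda>i. mpoch_inv (C i) (nu i))"

lemma shifted_FA_term_eq:
  assumes m: "\<forall>i\<ge>k. m i = 0" and le: "\<forall>i. nu i \<le> m i"
    and AB: "\<And>i. i < k \<Longrightarrow> commute (H (\<Sum>i<k. nu i)) (B i)"
    and BB: "\<And>i j. i < k \<Longrightarrow> j < k \<Longrightarrow> commute (B i) (B j)"
    and CC: "\<And>i j. i < k \<Longrightarrow> j < k \<Longrightarrow> commute (C i) (C j)"
    and inv: "\<And>i l. i < k \<Longrightarrow> invertible (C i + mat (of_nat l))"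
  shows "shifted_FA_term k c H B C nu m
     = (c ^ (\<Sum>i<k. nu i) / (\<Prod>i<k. fact (m i - nu i))) *\<^sub>R
        (mpoch (H (\<Sum>i<k. nu i)) ((\<Sum>i<k. m i) - (\<Sum>i<k. nu i))
          ** mprod k (\<lambda>i. mpoch (B i) (m i)) ** mprod k (\<lambda>i. mpoch_inv (C i) (m i)))"
proof -
  define G where "G = mpoch (H (\<Sum>i<k. nu i)) ((\<Sum>i<k. m i) - (\<Sum>i<k. nu i))"
  define Pnu where "Pnu = mprod k (\<lambda>i. mpoch (B i) (nu i))"
  define Qnu where "Qnu = mprod k (\<lambda>i. mpoch_inv (C i) (nu i))"
  define P' where "P' = mprod k (\<lambda>i. mpoch (B i + mat (of_nat (nu i))) (m i - nu i))"
  define Q' where "Q' = mprod k (\<lambda>i. mpoch_inv (C i + mat (of_nat (nu i))) (m i - nu i))"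
  define s where "s = c ^ (\<Sum>i<k. nu i) / (\<Prod>i<k. fact (m i - nu i))"
  have "(\<Sum>i<k. m i - nu i) = (\<Sum>i<k. m i) - (\<Sum>i<k. nu i)"
    by (rule sum_subtractf_nat) (use le in auto)
  with le m have "xmono k (\<lambda>_. c) nu
      (FA k (H (\<Sum>i<k. nu i)) (\<lambda>i. B i + mat (of_nat (nu i))) (\<lambda>i. C i + mat (of_nat (nu i)))) m
      = s *\<^sub>R (G ** P' ** Q')"
    by (simp add: xmono_def FA_def G_def P'_def Q'_def s_def power_sum divide_inverse mult.commute)
  then have "shifted_FA_term k c H B C nu m = s *\<^sub>R (Pnu ** (G ** P' ** Q') ** Qnu)"
    by (simp add: shifted_FA_term_def Pnu_def Qnu_def scaleR_matrix_mult_right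
        scalar_matrix_assoc[symmetric])
  also have "Pnu ** (G ** P' ** Q') ** Qnu = G ** (Pnu ** P') ** (Q' ** Qnu)"
  proof -
    have "commute G Pnu"
      unfolding G_def Pnu_def by (intro commute_mprod commute_mpoch_mpoch AB)
    then show ?thesis by (simp add: commute_def matrix_mul_assoc)
  qed
  also have "Pnu ** P' = mprod k (\<lambda>i. mpoch (B i) (m i))"
    unfolding Pnu_def P'_def using le by (intro mprod_mpoch_split BB) auto
  also have "Q' ** Qnu = mprod k (\<lambda>i. mpoch_inv (C i) (m i))"
    unfolding Q'_def Qnu_def using le by (intro mprod_mpoch_inv_split CC inv) auto
  finally show ?thesis by (simp add: G_def s_def)
qed

lemma shifted_FA_term_eq_0:
  assumes "nu \<in> tuples k n" and "\<not> ((\<forall>i\<ge>k. m i = 0) \<and> (\<forall>i. nu i \<le> m i))"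
  shows "shifted_FA_term k c H B C nu m = 0"
proof (cases "\<forall>i. nu i \<le> m i")
  case True
  with assms have "\<not> (\<forall>i\<ge>k. m i - nu i = 0)" by (auto simp: tuples_def)
  then show ?thesis by (simp add: shifted_FA_term_def xmono_def FA_eq_0 True)
next
  case False
  then show ?thesis unfolding shifted_FA_term_def xmono_def if_not_P[OF False] by simp
qed

lemma fact_eq_choose_mult_fact:
  assumes "k \<le> n"
  shows "(fact n :: real) = real (n choose k) * fact k * fact (n - k)"
proof -
  have "real (fact k * fact (n - k) * (n choose k)) = real (fact n)"
    using binomial_fact_lemma[OF assms] by (rule arg_cong)
  then show ?thesis by (simp add: ac_simps)
qed

lemma multinom_div_prod_fact_diff:
  assumes "nu \<in> tuples k n" and le: "\<forall>i. nu i \<le> m i"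
  shows "multinom n k nu / (\<Prod>i<k. fact (m i - nu i))
     = (\<Prod>i<k. real (m i choose nu i)) *
       (real (n choose (\<Sum>i<k. nu i)) * fact (\<Sum>i<k. nu i) / (\<Prod>i<k. fact (m i)))"
proof -
  define N where "N = (\<Sum>i<k. nu i)"
  have "N \<le> n" using assms(1) by (simp add: tuples_def N_def)
  then have fact_n: "(fact n :: real) = real (n choose N) * fact N * fact (n - N)"
    by (rule fact_eq_choose_mult_fact)
  have "(\<Prod>i<k. fact (m i) :: real)
      = (\<Prod>i<k. real (m i choose nu i) * fact (nu i) * fact (m i - nu i))"
    by (intro prod.cong refl fact_eq_choose_mult_fact) (use le in auto)
  then have fact_m: "(\<Prod>i<k. fact (m i) :: real)
      = (\<Prod>i<k. real (m i choose nu i)) * (\<Prod>i<k. fact (nu i)) * (\<Prod>i<k. fact (m i - nu i))"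
    by (simp add: prod.distrib)
  have "(\<Prod>i<k. real (m i choose nu i)) \<noteq> 0"
    using le by (auto simp: prod_zero_iff not_less)
  then show ?thesis
    unfolding N_def[symmetric] multinom_def fact_m fact_n by (simp add: field_simps)
qed

lemma multinom_shifted_FA_term:
  assumes nu: "nu \<in> tuples k n" and m: "\<forall>i\<ge>k. m i = 0"
    and AB: "\<And>i. i < k \<Longrightarrow> commute (H (\<Sum>i<k. nu i)) (B i)"
    and BB: "\<And>i j. i < k \<Longrightarrow> j < k \<Longrightarrow> commute (B i) (B j)"
    and CC: "\<And>i j. i < k \<Longrightarrow> j < k \<Longrightarrow> commute (C i) (C j)"
    and inv: "\<And>i l. i < k \<Longrightarrow> invertible (C i + mat (of_nat l))"
  shows "multinom n k nu *\<^sub>R shifted_FA_term k c H B C nu m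
     = (\<Prod>i<k. real (m i choose nu i)) *\<^sub>R
         ((real (n choose (\<Sum>i<k. nu i)) * fact (\<Sum>i<k. nu i) * c ^ (\<Sum>i<k. nu i)
             / (\<Prod>i<k. fact (m i))) *\<^sub>R
          (mpoch (H (\<Sum>i<k. nu i)) ((\<Sum>i<k. m i) - (\<Sum>i<k. nu i))
            ** mprod k (\<lambda>i. mpoch (B i) (m i)) ** mprod k (\<lambda>i. mpoch_inv (C i) (m i))))"
proof (cases "\<forall>i. nu i \<le> m i")
  case le: True
  define N where "N = (\<Sum>i<k. nu i)"
  have "multinom n k nu * (c ^ N / (\<Prod>i<k. fact (m i - nu i)))
      = multinom n k nu / (\<Prod>i<k. fact (m i - nu i)) * c ^ N"
    by simp
  also have "\<dots> = (\<Prod>i<k. real (m i choose nu i))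
      * (real (n choose N) * fact N * c ^ N / (\<Prod>i<k. fact (m i)))"
    unfolding multinom_div_prod_fact_diff[OF nu le] N_def by simp
  finally show ?thesis
    by (simp add: shifted_FA_term_eq[of k m nu H B C, OF m le AB BB CC inv] N_def)
next
  case False
  then obtain i where i: "m i < nu i" by (auto simp: not_le)
  have "i < k"
  proof (rule ccontr)
    assume "\<not> i < k"
    then have "nu i = 0" using nu by (simp add: tuples_def)
    with i show False by simp
  qed
  with i have "(\<Prod>i<k. real (m i choose nu i)) = 0" by (auto simp: prod_zero_iff)
  with False show ?thesis by (simp add: shifted_FA_term_eq_0[OF nu])
qed

lemma sum_shifted_FA_term:
  assumes m: "\<forall>i\<ge>k. m i = 0"
    and AB: "\<And>j i. i < k \<Longrightarrow> commute (H j) (B i)"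
    and BB: "\<And>i j. i < k \<Longrightarrow> j < k \<Longrightarrow> commute (B i) (B j)"
    and CC: "\<And>i j. i < k \<Longrightarrow> j < k \<Longrightarrow> commute (C i) (C j)"
    and inv: "\<And>i l. i < k \<Longrightarrow> invertible (C i + mat (of_nat l))"
  shows "(\<Sum>nu\<in>tuples k n. multinom n k nu *\<^sub>R shifted_FA_term k c H B C nu m)
     = (1 / (\<Prod>i<k. fact (m i))) *\<^sub>R
       ((\<Sum>j\<le>n. (c ^ j * real (shift_coeff n (\<Sum>i<k. m i) j)) *\<^sub>R mpoch (H j) ((\<Sum>i<k. m i) - j))
         ** mprod k (\<lambda>i. mpoch (B i) (m i)) ** mprod k (\<lambda>i. mpoch_inv (C i) (m i)))"
proof -
  define M where "M = (\<Sum>i<k. m i)"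
  define PQ where "PQ = mprod k (\<lambda>i. mpoch (B i) (m i)) ** mprod k (\<lambda>i. mpoch_inv (C i) (m i))"
  define g where "g j = (real (n choose j) * fact j * c ^ j / (\<Prod>i<k. fact (m i))) *\<^sub>R
    (mpoch (H j) (M - j) ** PQ)" for j
  have "(\<Sum>nu\<in>tuples k n. multinom n k nu *\<^sub>R shifted_FA_term k c H B C nu m)
      = (\<Sum>nu\<in>tuples k n. (\<Prod>i<k. real (m i choose nu i)) *\<^sub>R g (\<Sum>i<k. nu i))"
    by (intro sum.cong refl)
      (simp add: multinom_shifted_FA_term m AB BB CC inv g_def M_def PQ_def matrix_mul_assoc)
  also have "\<dots> = (\<Sum>j\<le>n. real (M choose j) *\<^sub>R g j)"
    unfolding M_def by (rule sum_tuples_prod_choose)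
  also have "\<dots> = (1 / (\<Prod>i<k. fact (m i))) *\<^sub>R
      ((\<Sum>j\<le>n. (c ^ j * real (shift_coeff n M j)) *\<^sub>R mpoch (H j) (M - j)) ** PQ)"
    by (simp add: g_def shift_coeff_def sum_matrix_mult scaleR_sum_right scalar_matrix_assoc[symmetric]
        ac_simps)
  finally show ?thesis by (simp add: M_def PQ_def matrix_mul_assoc)
qed

lemma FA_eq_sum_shifted_FA_term:
  assumes expand: "\<And>M. mpoch X M = (\<Sum>j\<le>n. (c ^ j * real (shift_coeff n M j)) *\<^sub>R mpoch (H j) (M - j))"
    and AB: "\<And>j i. i < k \<Longrightarrow> commute (H j) (B i)"
    and BB: "\<And>i j. i < k \<Longrightarrow> j < k \<Longrightarrow> commute (B i) (B j)"
    and CC: "\<And>i j. i < k \<Longrightarrow> j < k \<Longrightarrow> commute (C i) (C j)"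
    and inv: "\<And>i l. i < k \<Longrightarrow> invertible (C i + mat (of_nat l))"
  shows "FA k X B C = (\<lambda>m. \<Sum>nu\<in>tuples k n. multinom n k nu *\<^sub>R shifted_FA_term k c H B C nu m)"
proof
  fix m
  show "FA k X B C m = (\<Sum>nu\<in>tuples k n. multinom n k nu *\<^sub>R shifted_FA_term k c H B C nu m)"
    by (cases "\<forall>i\<ge>k. m i = 0")
      (simp_all add: FA_eq FA_eq_0 sum_shifted_FA_term shifted_FA_term_eq_0 AB BB CC inv expand)
qed

theorem mainTheorem2:
  fixes k n :: nat and A :: "complex^'r^'r" and B C :: "nat \<Rightarrow> complex^'r^'r"
  assumes "k \<ge> 1" and "n \<ge> 1"
    and "\<And>i m. i < k \<Longrightarrow> invertible (C i + mat (of_nat m))"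
    and "\<And>i. i < k \<Longrightarrow> A ** B i = B i ** A"
    and "\<And>i j. i < k \<Longrightarrow> j < k \<Longrightarrow> B i ** B j = B j ** B i"
    and "\<And>i j. i < k \<Longrightarrow> j < k \<Longrightarrow> C i ** C j = C j ** C i"
    and "\<And>m. invertible (A + mat (of_nat m))"
  shows "FA k (A + mat (of_nat n)) B C =
           (\<lambda>m. \<Sum>nu\<in>tuples k n. multinom n k nu *\<^sub>R
              (mprod k (\<lambda>i. mpoch (B i) (nu i))
               ** xmono k (\<lambda>_. 1) nu
                    (FA k (A + mat (of_nat (\<Sum>i<k. nu i))) (\<lambda>i. B i + mat (of_nat (nu i)))
                          (\<lambda>i. C i + mat (of_nat (nu i)))) m
               ** mprod k (\<lambda>i. mpoch_inv (C i) (nu i))))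
       \<and> ((\<forall>n1\<le>n. invertible (A - mat (of_nat n1))) \<longrightarrow>
          FA k (A - mat (of_nat n)) B C =
           (\<lambda>m. \<Sum>nu\<in>tuples k n. multinom n k nu *\<^sub>R
              (mprod k (\<lambda>i. mpoch (B i) (nu i))
               ** xmono k (\<lambda>_. -1) nu
                    (FA k A (\<lambda>i. B i + mat (of_nat (nu i)))
                          (\<lambda>i. C i + mat (of_nat (nu i)))) m
               ** mprod k (\<lambda>i. mpoch_inv (C i) (nu i)))))"
proof -
  have AB: "commute A (B i)" if "i < k" for i
    using assms(4)[OF that] by (simp add: commute_def)
  have BB: "commute (B i) (B j)" if "i < k" "j < k" for i j
    using assms(5)[OF that] by (simp add: commute_def)
  have CC: "commute (C i) (C j)" if "i < k" "j < k" for i j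
    using assms(6)[OF that] by (simp add: commute_def)
  have "FA k (A + mat (of_nat n)) B C = (\<lambda>m. \<Sum>nu\<in>tuples k n.
      multinom n k nu *\<^sub>R shifted_FA_term k 1 (\<lambda>j. A + mat (of_nat j)) B C nu m)"
    by (rule FA_eq_sum_shifted_FA_term)
      (simp_all add: mpoch_add_mat_expansion[of A n] commute_add_mat_left AB BB CC assms(3))
  moreover have "FA k (A - mat (of_nat n)) B C = (\<lambda>m. \<Sum>nu\<in>tuples k n.
      multinom n k nu *\<^sub>R shifted_FA_term k (-1) (\<lambda>_. A) B C nu m)"
    by (rule FA_eq_sum_shifted_FA_term) (simp_all add: mpoch_diff_mat_expansion AB BB CC assms(3))
  ultimately show ?thesis
    unfolding shifted_FA_term_def by simp
qed

end
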